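(* Let $\ell, c \in \mathbb{N}$. Over directed graphs, every $\mathrm{C}^2_{\ell,c}$ formula (whose free variables are therefore among $x,y$) is equivalent to a finite disjunction $$\bigvee_{i=1}^n \big( \alpha_i(x) \land \beta_i(y) \land \gamma_i(x,y) \big),$$ where $\alpha_i(x), \beta_i(y) \in \mathrm{C}^2_{\ell,c}$ and each $\gamma_i(x,y)$ is one of the following five formulas: $E(x, y) \land E(y, x)$; $E(x, y) \land \neg E(y, x)$; $\neg E(x, y) \land E(y, x)$; $\neg E(x, y) \land\neg E(y , x)\land x\neq y$; $x=y$.
   Context: A directed graph of dimension $d$ is a tuple $G=(V,E,\lambda)$ with $V$ a finite set of nodes, $E\subseteq V\times V$ with no loops $(v,v)$, and $\lambda:V\to\{0,1\}^d$. It is identified with the first-order structure with domain $V$, binary relation $E$, and unary predicates $P_1,\dots,P_d$ where $P_i=\{v:\lambda(v)_i=1\}$. $\mathrm{C}^2$ is the fragment of first-order logic (with equality, $E$, $P_1,\dots,P_d$) using only the two variables $x,y$ but allowing counting quantifiers $\exists_k$ for $k\in\mathbb{N}$, where $\exists_k x\,\varphi$ means that $\varphi$ holds for at least $k$ distinct elements. The quantifier depth of a formula is its maximal nesting of quantifiers, and its counting rank is the maximal $k$ occurring in its counting quantifiers. $\mathrm{C}^2_{\ell,c}$ denotes the $\mathrm{C}^2$ formulas of depth at most $\ell$ and counting rank at most $c$. "Equivalent over directed graphs" means: satisfied by the same assignments in every directed graph (as defined, i.e. loop-free). *)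

theory Defs
  imports Main
begin

text \<open>Nodes are natural numbers (every finite graph is isomorphic to one on nat).
  lab v i is the i-th bit of the label of v, meaningful for 1 \<le> i \<le> d.\<close>

record dgraph =
  nodes :: "nat set"
  edges :: "(nat \<times> nat) set"
  lab :: "nat \<Rightarrow> nat \<Rightarrow> bool"

definition is_digraph :: "dgraph \<Rightarrow> bool" where
  "is_digraph G \<longleftrightarrow> finite (nodes G) \<and> edges G \<subseteq> nodes G \<times> nodes G
     \<and> (\<forall>v. (v, v) \<notin> edges G)"

datatype var = X | Y

datatype c2 =
    CEq var var
  | CEdge var var
  | CPred nat var
  | CNot c2
  | CAnd c2 c2
  | COr c2 c2
  | CEx nat var c2   \<comment> \<open>CEx k v phi: at least k elements v satisfy phi\<close>

fun wf_c2 :: "nat \<Rightarrow> c2 \<Rightarrow> bool" where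
  "wf_c2 d (CPred i v) \<longleftrightarrow> 1 \<le> i \<and> i \<le> d"
| "wf_c2 d (CNot f) \<longleftrightarrow> wf_c2 d f"
| "wf_c2 d (CAnd f g) \<longleftrightarrow> wf_c2 d f \<and> wf_c2 d g"
| "wf_c2 d (COr f g) \<longleftrightarrow> wf_c2 d f \<and> wf_c2 d g"
| "wf_c2 d (CEx k v f) \<longleftrightarrow> wf_c2 d f"
| "wf_c2 d _ \<longleftrightarrow> True"

fun depth :: "c2 \<Rightarrow> nat" where
  "depth (CNot f) = depth f"
| "depth (CAnd f g) = max (depth f) (depth g)"
| "depth (COr f g) = max (depth f) (depth g)"
| "depth (CEx k v f) = Suc (depth f)"
| "depth _ = 0"

fun crank :: "c2 \<Rightarrow> nat" where
  "crank (CNot f) = crank f"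
| "crank (CAnd f g) = max (crank f) (crank g)"
| "crank (COr f g) = max (crank f) (crank g)"
| "crank (CEx k v f) = max k (crank f)"
| "crank _ = 0"

fun free_vars :: "c2 \<Rightarrow> var set" where
  "free_vars (CEq u v) = {u, v}"
| "free_vars (CEdge u v) = {u, v}"
| "free_vars (CPred i v) = {v}"
| "free_vars (CNot f) = free_vars f"
| "free_vars (CAnd f g) = free_vars f \<union> free_vars g"
| "free_vars (COr f g) = free_vars f \<union> free_vars g"
| "free_vars (CEx k v f) = free_vars f - {v}"

fun sat :: "dgraph \<Rightarrow> (var \<Rightarrow> nat) \<Rightarrow> c2 \<Rightarrow> bool" where
  "sat G a (CEq u v) \<longleftrightarrow> a u = a v"
| "sat G a (CEdge u v) \<longleftrightarrow> (a u, a v) \<in> edges G"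
| "sat G a (CPred i v) \<longleftrightarrow> lab G (a v) i"
| "sat G a (CNot f) \<longleftrightarrow> \<not> sat G a f"
| "sat G a (CAnd f g) \<longleftrightarrow> sat G a f \<and> sat G a g"
| "sat G a (COr f g) \<longleftrightarrow> sat G a f \<or> sat G a g"
| "sat G a (CEx k v f) \<longleftrightarrow> k \<le> card {b \<in> nodes G. sat G (a(v := b)) f}"

definition gammas :: "c2 set" where
  "gammas = {
     CAnd (CEdge X Y) (CEdge Y X),
     CAnd (CEdge X Y) (CNot (CEdge Y X)),
     CAnd (CNot (CEdge X Y)) (CEdge Y X),
     CAnd (CAnd (CNot (CEdge X Y)) (CNot (CEdge Y X))) (CNot (CEq X Y)),
     CEq X Y}"

abbreviation in_C2 :: "nat \<Rightarrow> nat \<Rightarrow> nat \<Rightarrow> c2 \<Rightarrow> bool" where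
  "in_C2 d l c f \<equiv> wf_c2 d f \<and> depth f \<le> l \<and> crank f \<le> c"

end

theory Submission
  imports Defs
begin

(* In a loop-free graph every pair of nodes satisfies exactly one of the five edge types gamma.
   Fixing gamma fixes the truth value of every atom mentioning both x and y, and every other
   atom or counting subformula has at most one free variable. Hence, relative to each gamma,
   a formula is a finite union of rectangles alpha(x) & beta(y) with alpha, beta in C2_{l,c};
   such unions are closed under union, intersection and (by De Morgan) complement without
   raising depth or counting rank. Gluing the unions for the five edge types gives the
   disjunction. *)

definition loop_free :: "dgraph \<Rightarrow> bool" where
  "loop_free G \<longleftrightarrow> (\<forall>v. (v, v) \<notin> edges G)"

lemma gammas_exhaustive: "\<exists>\<gamma>\<in>gammas. sat G a \<gamma>"
  by (auto simp: gammas_def)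

lemma gammas_exclusive:
  "\<lbrakk>loop_free G; \<gamma> \<in> gammas; \<gamma>' \<in> gammas; sat G a \<gamma>; sat G a \<gamma>'\<rbrakk> \<Longrightarrow> \<gamma> = \<gamma>'"
  by (auto simp: gammas_def loop_free_def)

lemma gammas_determine_atoms:
  assumes "loop_free G" "loop_free G'" "\<gamma> \<in> gammas" "sat G a \<gamma>" "sat G' b \<gamma>"
  shows "sat G a (CEq u v) \<longleftrightarrow> sat G' b (CEq u v)"
    and "sat G a (CEdge u v) \<longleftrightarrow> sat G' b (CEdge u v)"
  using assms by (cases u; cases v; auto simp: gammas_def loop_free_def)+

lemma free_vars_CEx_X: "free_vars (CEx k X \<phi>) \<subseteq> {Y}"
  using var.exhaust by auto

lemma free_vars_CEx_Y: "free_vars (CEx k Y \<phi>) \<subseteq> {X}"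
  using var.exhaust by auto

definition C2_vars :: "nat \<Rightarrow> nat \<Rightarrow> nat \<Rightarrow> var set \<Rightarrow> c2 set" where
  "C2_vars d l c V = {\<phi>. in_C2 d l c \<phi> \<and> free_vars \<phi> \<subseteq> V}"

lemma CNot_C2_vars_iff [simp]: "CNot \<phi> \<in> C2_vars d l c V \<longleftrightarrow> \<phi> \<in> C2_vars d l c V"
  by (simp add: C2_vars_def)

lemma CAnd_C2_vars: "\<phi> \<in> C2_vars d l c V \<Longrightarrow> \<psi> \<in> C2_vars d l c V \<Longrightarrow> CAnd \<phi> \<psi> \<in> C2_vars d l c V"
  by (simp add: C2_vars_def)

lemma CEq_C2_vars [simp]: "CEq v v \<in> C2_vars d l c {v}"
  by (simp add: C2_vars_def)

abbreviation rect_formulas :: "nat \<Rightarrow> nat \<Rightarrow> nat \<Rightarrow> (c2 \<times> c2) set" where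
  "rect_formulas d l c \<equiv> C2_vars d l c {X} \<times> C2_vars d l c {Y}"

definition sat_rects :: "dgraph \<Rightarrow> (var \<Rightarrow> nat) \<Rightarrow> (c2 \<times> c2) list \<Rightarrow> bool" where
  "sat_rects G a R \<longleftrightarrow> (\<exists>(\<alpha>, \<beta>) \<in> set R. sat G a \<alpha> \<and> sat G a \<beta>)"

lemma sat_rects_simps [simp]:
  "\<not> sat_rects G a []"
  "sat_rects G a (p # R) \<longleftrightarrow> sat G a (fst p) \<and> sat G a (snd p) \<or> sat_rects G a R"
  "sat_rects G a (R @ S) \<longleftrightarrow> sat_rects G a R \<or> sat_rects G a S"
  by (auto simp: sat_rects_def)

(* CEq X X and CEq Y Y serve as "true" in x resp. y, so (CEq X X, CEq Y Y) is the full rectangle. *)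
fun rects_compl :: "(c2 \<times> c2) list \<Rightarrow> (c2 \<times> c2) list" where
  "rects_compl [] = [(CEq X X, CEq Y Y)]"
| "rects_compl ((\<alpha>, \<beta>) # R) =
     [(CAnd (CNot \<alpha>) \<alpha>', \<beta>'). (\<alpha>', \<beta>') \<leftarrow> rects_compl R] @
     [(\<alpha>', CAnd (CNot \<beta>) \<beta>'). (\<alpha>', \<beta>') \<leftarrow> rects_compl R]"

lemma sat_rects_CAnd_left:
  "sat_rects G a [(CAnd \<phi> \<alpha>, \<beta>). (\<alpha>, \<beta>) \<leftarrow> R] \<longleftrightarrow> sat G a \<phi> \<and> sat_rects G a R"
  by (induction R) auto

lemma sat_rects_CAnd_right:
  "sat_rects G a [(\<alpha>, CAnd \<psi> \<beta>). (\<alpha>, \<beta>) \<leftarrow> R] \<longleftrightarrow> sat G a \<psi> \<and> sat_rects G a R"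
  by (induction R) auto

lemma sat_rects_compl: "sat_rects G a (rects_compl R) \<longleftrightarrow> \<not> sat_rects G a R"
  by (induction R rule: rects_compl.induct) (auto simp: sat_rects_CAnd_left sat_rects_CAnd_right)

lemma rects_compl_rect_formulas:
  "set R \<subseteq> rect_formulas d l c \<Longrightarrow> set (rects_compl R) \<subseteq> rect_formulas d l c"
  by (induction R rule: rects_compl.induct) (auto intro: CAnd_C2_vars)

definition rects_inter :: "(c2 \<times> c2) list \<Rightarrow> (c2 \<times> c2) list \<Rightarrow> (c2 \<times> c2) list" where
  "rects_inter R S = [(CAnd \<alpha> \<alpha>', CAnd \<beta> \<beta>'). (\<alpha>, \<beta>) \<leftarrow> R, (\<alpha>', \<beta>') \<leftarrow> S]"

lemma sat_rects_inter: "sat_rects G a (rects_inter R S) \<longleftrightarrow> sat_rects G a R \<and> sat_rects G a S"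
  by (fastforce simp: sat_rects_def rects_inter_def)

lemma rects_inter_rect_formulas:
  "set R \<subseteq> rect_formulas d l c \<Longrightarrow> set S \<subseteq> rect_formulas d l c \<Longrightarrow>
   set (rects_inter R S) \<subseteq> rect_formulas d l c"
  by (auto simp: rects_inter_def intro: CAnd_C2_vars)

(* Only pairs of edge type gamma are constrained by R gamma, so negation and conjunction can be
   carried out separately for each edge type. *)
definition rect_decomp :: "nat \<Rightarrow> nat \<Rightarrow> nat \<Rightarrow> (c2 \<Rightarrow> (c2 \<times> c2) list) \<Rightarrow> c2 \<Rightarrow> bool" where
  "rect_decomp d l c R \<phi> \<longleftrightarrow> (\<forall>\<gamma>. set (R \<gamma>) \<subseteq> rect_formulas d l c) \<and>
     (\<forall>G a \<gamma>. loop_free G \<and> \<gamma> \<in> gammas \<and> sat G a \<gamma> \<longrightarrow> (sat G a \<phi> \<longleftrightarrow> sat_rects G a (R \<gamma>)))"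

lemma rect_decomp_one_var:
  assumes "\<phi> \<in> C2_vars d l c {X} \<or> \<phi> \<in> C2_vars d l c {Y}"
  shows "\<exists>R. rect_decomp d l c R \<phi>"
  using assms
proof
  assume "\<phi> \<in> C2_vars d l c {X}"
  then show ?thesis by (intro exI[of _ "\<lambda>_. [(\<phi>, CEq Y Y)]"]) (simp add: rect_decomp_def)
next
  assume "\<phi> \<in> C2_vars d l c {Y}"
  then show ?thesis by (intro exI[of _ "\<lambda>_. [(CEq X X, \<phi>)]"]) (simp add: rect_decomp_def)
qed

lemma rect_decomp_if_determined:
  assumes determined: "\<And>\<gamma> G a G' b. \<lbrakk>loop_free G; loop_free G'; \<gamma> \<in> gammas; sat G a \<gamma>; sat G' b \<gamma>\<rbrakk>
    \<Longrightarrow> sat G a \<phi> \<longleftrightarrow> sat G' b \<phi>"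
  shows "\<exists>R. rect_decomp d l c R \<phi>"
proof
  let ?holds = "\<lambda>\<gamma>. \<exists>G a. loop_free G \<and> sat G a \<gamma> \<and> sat G a \<phi>"
  show "rect_decomp d l c (\<lambda>\<gamma>. if ?holds \<gamma> then [(CEq X X, CEq Y Y)] else []) \<phi>"
    unfolding rect_decomp_def
  proof (intro conjI allI impI)
    fix G a \<gamma>
    assume G: "loop_free G \<and> \<gamma> \<in> gammas \<and> sat G a \<gamma>"
    show "sat G a \<phi> \<longleftrightarrow> sat_rects G a (if ?holds \<gamma> then [(CEq X X, CEq Y Y)] else [])"
    proof (cases "?holds \<gamma>")
      case True
      then obtain G' b where "loop_free G'" "sat G' b \<gamma>" "sat G' b \<phi>"
        by blast
      then show ?thesis
        using True determined[of G G' \<gamma> a b] G by simp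
    next
      case False
      then show ?thesis
        using G by auto
    qed
  qed auto
qed

lemma rect_decomp_CNot:
  "rect_decomp d l c R \<phi> \<Longrightarrow> rect_decomp d l c (\<lambda>\<gamma>. rects_compl (R \<gamma>)) (CNot \<phi>)"
  by (simp add: rect_decomp_def sat_rects_compl rects_compl_rect_formulas)

lemma rect_decomp_CAnd:
  "rect_decomp d l c R \<phi> \<Longrightarrow> rect_decomp d l c S \<psi> \<Longrightarrow>
   rect_decomp d l c (\<lambda>\<gamma>. rects_inter (R \<gamma>) (S \<gamma>)) (CAnd \<phi> \<psi>)"
  by (auto simp: rect_decomp_def sat_rects_inter rects_inter_rect_formulas)

lemma rect_decomp_COr:
  "rect_decomp d l c R \<phi> \<Longrightarrow> rect_decomp d l c S \<psi> \<Longrightarrow>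
   rect_decomp d l c (\<lambda>\<gamma>. R \<gamma> @ S \<gamma>) (COr \<phi> \<psi>)"
  by (auto simp: rect_decomp_def)

lemma rect_decomp_exists: "in_C2 d l c \<phi> \<Longrightarrow> \<exists>R. rect_decomp d l c R \<phi>"
proof (induction \<phi>)
  case (CEq u v)
  show ?case by (rule rect_decomp_if_determined) (rule gammas_determine_atoms)
next
  case (CEdge u v)
  show ?case by (rule rect_decomp_if_determined) (rule gammas_determine_atoms)
next
  case (CPred i v)
  then show ?case
    by (intro rect_decomp_one_var) (cases v; simp add: C2_vars_def)
next
  case (CNot \<phi>)
  then show ?case by (auto intro: rect_decomp_CNot)
next
  case (CAnd \<phi> \<psi>)
  then show ?case by (auto intro: rect_decomp_CAnd)
next
  case (COr \<phi> \<psi>)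
  then show ?case by (auto intro: rect_decomp_COr)
next
  case (CEx k v \<phi>)
  then show ?case
    using free_vars_CEx_X free_vars_CEx_Y
    by (intro rect_decomp_one_var) (cases v; simp add: C2_vars_def)
qed

lemma dnf_of_rect_decomp:
  assumes R: "rect_decomp d l c R \<phi>"
  obtains L where "\<forall>(\<alpha>, \<beta>, \<gamma>) \<in> set L. (\<alpha>, \<beta>) \<in> rect_formulas d l c \<and> \<gamma> \<in> gammas"
    and "\<forall>G a. loop_free G \<longrightarrow>
      (sat G a \<phi> \<longleftrightarrow> (\<exists>(\<alpha>, \<beta>, \<gamma>) \<in> set L. sat G a \<alpha> \<and> sat G a \<beta> \<and> sat G a \<gamma>))"
proof -
  obtain gs where gs: "set gs = gammas"
    using finite_list[of gammas] by (auto simp: gammas_def)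
  let ?L = "[(\<alpha>, \<beta>, \<gamma>). \<gamma> \<leftarrow> gs, (\<alpha>, \<beta>) \<leftarrow> R \<gamma>]"
  have L: "(\<alpha>, \<beta>, \<gamma>) \<in> set ?L \<longleftrightarrow> \<gamma> \<in> gammas \<and> (\<alpha>, \<beta>) \<in> set (R \<gamma>)" for \<alpha> \<beta> \<gamma>
    using gs by auto
  show ?thesis
  proof (rule that)
    show "\<forall>(\<alpha>, \<beta>, \<gamma>) \<in> set ?L. (\<alpha>, \<beta>) \<in> rect_formulas d l c \<and> \<gamma> \<in> gammas"
      using R unfolding Ball_def split_paired_All prod.case L rect_decomp_def by blast
    show "\<forall>G a. loop_free G \<longrightarrow>
      (sat G a \<phi> \<longleftrightarrow> (\<exists>(\<alpha>, \<beta>, \<gamma>) \<in> set ?L. sat G a \<alpha> \<and> sat G a \<beta> \<and> sat G a \<gamma>))"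
    proof (intro allI impI)
      fix G a
      assume G: "loop_free G"
      obtain \<gamma> where \<gamma>: "\<gamma> \<in> gammas" "sat G a \<gamma>"
        using gammas_exhaustive by blast
      have "sat G a \<phi> \<longleftrightarrow> sat_rects G a (R \<gamma>)"
        using R G \<gamma> by (simp add: rect_decomp_def)
      also have "\<dots> \<longleftrightarrow> (\<exists>(\<alpha>, \<beta>, \<gamma>') \<in> set ?L. sat G a \<alpha> \<and> sat G a \<beta> \<and> sat G a \<gamma>')"
        unfolding sat_rects_def Bex_def split_paired_Ex prod.case L
        using gammas_exclusive[OF G \<gamma>(1)] \<gamma> by blast
      finally show "sat G a \<phi> \<longleftrightarrow>
        (\<exists>(\<alpha>, \<beta>, \<gamma>) \<in> set ?L. sat G a \<alpha> \<and> sat G a \<beta> \<and> sat G a \<gamma>)" .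
    qed
  qed
qed

theorem lemma1:
  fixes d l c :: nat and phi :: c2
  assumes "in_C2 d l c phi"
  shows "\<exists>L :: (c2 \<times> c2 \<times> c2) list.
     (\<forall>(\<alpha>, \<beta>, \<gamma>) \<in> set L.
        in_C2 d l c \<alpha> \<and> free_vars \<alpha> \<subseteq> {X} \<and>
        in_C2 d l c \<beta> \<and> free_vars \<beta> \<subseteq> {Y} \<and> \<gamma> \<in> gammas) \<and>
     (\<forall>G a. is_digraph G \<and> a X \<in> nodes G \<and> a Y \<in> nodes G \<longrightarrow>
        (sat G a phi \<longleftrightarrow>
          (\<exists>(\<alpha>, \<beta>, \<gamma>) \<in> set L. sat G a \<alpha> \<and> sat G a \<beta> \<and> sat G a \<gamma>)))"
proof -
  obtain R where "rect_decomp d l c R phi"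
    using rect_decomp_exists[OF assms] ..
  then obtain L
    where L: "\<forall>(\<alpha>, \<beta>, \<gamma>) \<in> set L. (\<alpha>, \<beta>) \<in> rect_formulas d l c \<and> \<gamma> \<in> gammas"
      and sat_L: "\<forall>G a. loop_free G \<longrightarrow>
        (sat G a phi \<longleftrightarrow> (\<exists>(\<alpha>, \<beta>, \<gamma>) \<in> set L. sat G a \<alpha> \<and> sat G a \<beta> \<and> sat G a \<gamma>))"
    by (rule dnf_of_rect_decomp)
  show ?thesis
  proof (intro exI conjI)
    show "\<forall>(\<alpha>, \<beta>, \<gamma>) \<in> set L.
        in_C2 d l c \<alpha> \<and> free_vars \<alpha> \<subseteq> {X} \<and>
        in_C2 d l c \<beta> \<and> free_vars \<beta> \<subseteq> {Y} \<and> \<gamma> \<in> gammas"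
      using L by (auto simp: C2_vars_def)
    show "\<forall>G a. is_digraph G \<and> a X \<in> nodes G \<and> a Y \<in> nodes G \<longrightarrow>
        (sat G a phi \<longleftrightarrow> (\<exists>(\<alpha>, \<beta>, \<gamma>) \<in> set L. sat G a \<alpha> \<and> sat G a \<beta> \<and> sat G a \<gamma>))"
      using sat_L by (simp add: is_digraph_def loop_free_def)
  qed
qed

end
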